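(* Let $n\ge2$ and $n\in\{p,p+1\}$ for a prime $p$. Then: (i) $p$ is an isolated vertex of $\mathcal O_0(S_n)$, and the type $[1^{n-p},p]$ is an isolated vertex of $P_0(\mathcal T(S_n))$; (ii) every vertex $[\psi]$ of $\widetilde P_0(S_n)$ with $o(\psi)=p$ is isolated in $\widetilde P_0(S_n)$; (iii) the number of components of $\widetilde P_0(S_n)$ containing vertices of order $p$ is $(p-2)!$ if $n=p$ and $(p+1)(p-2)!$ if $n=p+1$.
   Context: $\widetilde P_0(G)$: vertex set $\{[x]:x\in G\setminus\{1\}\}$ with $[x]=\{y:\langle y\rangle=\langle x\rangle\}$, distinct $[x],[y]$ adjacent iff some representatives are one a positive power of the other. $\mathcal O_0(G)$: vertices the element orders $\ne1$, distinct $m,m'$ adjacent iff one divides the other. For $\psi\in S_n$, $T_\psi$ is the partition of $n$ given by orbit lengths of $\langle\psi\rangle$; for $T=[m_1^{t_1},\dots,m_k^{t_k}]$, $T^a=[(m_i/\gcd(a,m_i))^{t_i\gcd(a,m_i)}]_i$. $P_0(\mathcal T(S_n))$: vertices the partitions of $n$ other than $[1^n]$, distinct $T,T'$ adjacent iff one is a power of the other. *)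

theory Defs
  imports "HOL-Algebra.Algebra" "HOL-Library.Multiset"
begin

definition isolated_in :: "'v set \<Rightarrow> ('v \<Rightarrow> 'v \<Rightarrow> bool) \<Rightarrow> 'v \<Rightarrow> bool" where
  "isolated_in V adj v \<longleftrightarrow> v \<in> V \<and> (\<forall>w\<in>V. \<not> adj v w)"

definition component_of :: "'v set \<Rightarrow> ('v \<Rightarrow> 'v \<Rightarrow> bool) \<Rightarrow> 'v \<Rightarrow> 'v set" where
  "component_of V adj v = {w. (\<lambda>a b. a \<in> V \<and> b \<in> V \<and> adj a b)\<^sup>*\<^sup>* v w}"

definition components :: "'v set \<Rightarrow> ('v \<Rightarrow> 'v \<Rightarrow> bool) \<Rightarrow> 'v set set" where
  "components V adj = component_of V adj ` V"

definition pclass :: "('a, 'b) monoid_scheme \<Rightarrow> 'a \<Rightarrow> 'a set" where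
  "pclass G x = {y \<in> carrier G. generate G {y} = generate G {x}}"

definition rpg_vertices :: "('a, 'b) monoid_scheme \<Rightarrow> 'a set set" where
  "rpg_vertices G = {pclass G x | x. x \<in> carrier G \<and> x \<noteq> one G}"

definition rpg_adj :: "('a, 'b) monoid_scheme \<Rightarrow> 'a set \<Rightarrow> 'a set \<Rightarrow> bool" where
  "rpg_adj G A B \<longleftrightarrow> A \<noteq> B \<and>
     (\<exists>x\<in>A. \<exists>y\<in>B. (\<exists>k::nat. k > 0 \<and> x = pow G y k) \<or> (\<exists>k::nat. k > 0 \<and> y = pow G x k))"

definition og_vertices :: "('a, 'b) monoid_scheme \<Rightarrow> nat set" where
  "og_vertices G = {group.ord G x | x. x \<in> carrier G} - {1}"

definition og_adj :: "nat \<Rightarrow> nat \<Rightarrow> bool" where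
  "og_adj m m' \<longleftrightarrow> m \<noteq> m' \<and> (m dvd m' \<or> m' dvd m)"

text \<open>Types (partitions of n); \<open>P_0(T(S_n))\<close> has all partitions of n except \<open>[1^n]\<close> as vertices.\<close>
definition is_partition :: "nat \<Rightarrow> nat multiset \<Rightarrow> bool" where
  "is_partition n T \<longleftrightarrow> (\<forall>m\<in>#T. m > 0) \<and> sum_mset T = n"

definition type_pow :: "nat multiset \<Rightarrow> nat \<Rightarrow> nat multiset" where
  "type_pow T a = (\<Sum>m\<in>#T. replicate_mset (gcd a m) (m div gcd a m))"

definition tg_vertices :: "nat \<Rightarrow> nat multiset set" where
  "tg_vertices n = {T. is_partition n T \<and> T \<noteq> replicate_mset n 1}"

definition tg_adj :: "nat multiset \<Rightarrow> nat multiset \<Rightarrow> bool" where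
  "tg_adj T T' \<longleftrightarrow> T \<noteq> T' \<and> (\<exists>a::nat. a > 0 \<and> (T' = type_pow T a \<or> T = type_pow T' a))"

end

theory Submission
  imports Defs "HOL-Combinatorics.Cycles" "HOL-Combinatorics.Orbits" "HOL-Combinatorics.Multiset_Permutations"
begin

text \<open>
  Let n \<le> p + 1. A permutation commuting with a p-cycle \<tau> of S_n preserves the p points moved
  by \<tau>, hence fixes the at most one remaining point and acts on the cycle as a power of \<tau>.
  Applied to \<tau> = \<sigma>^k where ord \<sigma> = p k, this shows that every element of S_n of order divisible
  by p has order exactly p. In any group with this property a proper power or root of an element
  of order p generates the same cyclic group, so the class of such an element is an isolated
  vertex of the reduced power graph, and p is an isolated vertex of the order graph. The
  components containing elements of order p are therefore singletons, one per cyclic subgroup of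
  order p: there are (p - 1)! resp. (p + 1) (p - 1)! elements of order p (a p-cycle on a
  p-element set is determined by its cycle list starting at a given point), and each class
  contains p - 1 of them.
  Finally, the powers of the hook type [1^(n-p), p] are the hook itself and [1^n], and since
  n - p \<le> 1 no other type has the hook as a power.
\<close>

section \<open>Permutations of prime order\<close>

lemma set_support_eq_orbit:
  assumes "permutation \<sigma>"
  shows "set (support \<sigma> a) = orbit \<sigma> a"
  using orbit_altdef_permutation[OF assms] support_set[OF assms] by auto

lemma card_orbit_eq_least_power:
  assumes "permutation \<sigma>"
  shows "card (orbit \<sigma> a) = least_power \<sigma> a"
  using distinct_card[OF cycle_of_permutation[OF assms]] set_support_eq_orbit[OF assms] by simp

lemma least_power_eq_prime:
  assumes "Factorial_Ring.prime (p::nat)" "permutation \<sigma>" "\<sigma> ^^ p = id" "\<sigma> a \<noteq> a"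
  shows "least_power \<sigma> a = p"
proof -
  have "least_power \<sigma> a dvd p"
    using least_power_dvd[OF assms(2)] assms(3) by simp
  moreover have "least_power \<sigma> a \<noteq> 1"
    using least_power_gt_one[OF assms(2,4)] by simp
  ultimately show ?thesis
    using assms(1) by (metis prime_nat_iff)
qed

lemma card_orbit_eq_prime:
  assumes "Factorial_Ring.prime (p::nat)" "permutation \<sigma>" "\<sigma> ^^ p = id" "\<sigma> a \<noteq> a"
  shows "card (orbit \<sigma> a) = p"
  using card_orbit_eq_least_power least_power_eq_prime assms by metis

lemma orbit_eq_if_mem_orbit:
  assumes "permutation \<sigma>" "y \<in> orbit \<sigma> a"
  shows "orbit \<sigma> y = orbit \<sigma> a"
  using orbit_cyclic_eq3[OF cyclic_on_orbit'[OF assms(1)] assms(2)] .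

lemma moved_points_eq_orbit_if_prime_order:
  assumes p: "Factorial_Ring.prime (p::nat)" and perm: "\<sigma> permutes A" "finite A" and small: "card A \<le> p + 1"
    and pow: "\<sigma> ^^ p = id" and moved: "\<sigma> a \<noteq> a"
  shows "{y. \<sigma> y \<noteq> y} = orbit \<sigma> a"
proof -
  have \<sigma>: "permutation \<sigma>"
    using perm permutation_permutes by blast
  have p2: "p \<ge> 2"
    using p prime_ge_2_nat by blast
  have card_orbit: "card (orbit \<sigma> y) = p" if "\<sigma> y \<noteq> y" for y
    using card_orbit_eq_prime[OF p \<sigma> pow that] .
  show ?thesis
  proof (rule subset_antisym; rule subsetI)
    fix y assume "y \<in> {y. \<sigma> y \<noteq> y}"
    then have y: "\<sigma> y \<noteq> y" by simp
    show "y \<in> orbit \<sigma> a"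
    proof (rule ccontr)
      assume y_out: "y \<notin> orbit \<sigma> a"
      have "orbit \<sigma> y \<inter> orbit \<sigma> a = {}"
        using y_out orbit_eq_if_mem_orbit[OF \<sigma>] permutation_self_in_orbit[OF \<sigma>, of y] by blast
      moreover have sub: "orbit \<sigma> y \<union> orbit \<sigma> a \<subseteq> A"
        using permutes_orbit_subset[OF perm(1)] y moved permutes_not_in[OF perm(1)] by blast
      moreover have "finite (orbit \<sigma> y)" "finite (orbit \<sigma> a)"
        using finite_subset[OF sub perm(2)] by auto
      ultimately have "card (orbit \<sigma> y) + card (orbit \<sigma> a) \<le> card A"
        using card_mono[OF perm(2) sub] card_Un_disjoint by metis
      then show False
        using card_orbit[OF y] card_orbit[OF moved] small p2 by simp
    qed
  next
    fix y assume y: "y \<in> orbit \<sigma> a"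
    have "orbit \<sigma> y \<noteq> {y}"
      using orbit_eq_if_mem_orbit[OF \<sigma> y] card_orbit[OF moved] p2 by auto
    then show "y \<in> {y. \<sigma> y \<noteq> y}"
      using orbit_eq_singleton_iff[of \<sigma> y] by simp
  qed
qed

lemma moved_points_eq_if_card_eq_prime:
  assumes p: "Factorial_Ring.prime (p::nat)" and perm: "\<sigma> permutes A" "finite A" and card: "card A = p"
    and pow: "\<sigma> ^^ p = id" and "\<sigma> \<noteq> id"
  shows "{y. \<sigma> y \<noteq> y} = A"
proof -
  obtain b where b: "\<sigma> b \<noteq> b"
    using \<open>\<sigma> \<noteq> id\<close> by (auto simp: fun_eq_iff)
  have moved: "{y. \<sigma> y \<noteq> y} = orbit \<sigma> b"
    using moved_points_eq_orbit_if_prime_order[OF p perm _ pow b] card by simp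
  have "card (orbit \<sigma> b) = card A"
    using card_orbit_eq_prime[OF p permutes_imp_permutation[OF perm(2,1)] pow b] card by simp
  moreover have "orbit \<sigma> b \<subseteq> A"
    using permutes_orbit_subset[OF perm(1)] b permutes_not_in[OF perm(1)] by blast
  ultimately show ?thesis
    using moved card_subset_eq[OF perm(2)] by metis
qed

lemma funpow_fixpoint:
  assumes "f x = x"
  shows "(f ^^ n) x = x"
  using assms by (induction n) simp_all

lemma commuting_funpow_apply:
  assumes "\<sigma> \<circ> \<tau> = \<tau> \<circ> \<sigma>"
  shows "\<sigma> ((\<tau> ^^ i) x) = (\<tau> ^^ i) (\<sigma> x)"
  using assms by (induction i) (simp_all add: fun_eq_iff)

lemma commuting_inj_preserves_moved_points:
  assumes "\<sigma> \<circ> \<tau> = \<tau> \<circ> \<sigma>" "inj \<sigma>"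
  shows "\<tau> (\<sigma> y) \<noteq> \<sigma> y \<longleftrightarrow> \<tau> y \<noteq> y"
proof -
  have "\<tau> (\<sigma> y) = \<sigma> (\<tau> y)"
    using assms(1) by (metis comp_apply)
  then show ?thesis
    using inj_eq[OF assms(2)] by simp
qed

lemma commuting_eq_funpow_on_orbit:
  assumes comm: "\<sigma> \<circ> \<tau> = \<tau> \<circ> \<sigma>" and \<tau>: "permutation \<tau>" and x: "\<sigma> x \<in> orbit \<tau> x"
  obtains j where "\<And>z. z \<in> orbit \<tau> x \<Longrightarrow> \<sigma> z = (\<tau> ^^ j) z"
proof -
  obtain j where j: "\<sigma> x = (\<tau> ^^ j) x"
    using x orbit_altdef_permutation[OF \<tau>] by auto
  have "\<sigma> z = (\<tau> ^^ j) z" if z_orbit: "z \<in> orbit \<tau> x" for z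
  proof -
    obtain i where z: "z = (\<tau> ^^ i) x"
      using z_orbit orbit_altdef_permutation[OF \<tau>] by auto
    have "\<sigma> z = (\<tau> ^^ i) ((\<tau> ^^ j) x)"
      using z j commuting_funpow_apply[OF comm] by simp
    also have "\<dots> = (\<tau> ^^ j) z"
      using z by (metis comp_apply funpow_add add.commute)
    finally show ?thesis .
  qed
  then show ?thesis
    using that by blast
qed

lemma permutes_fixes_outside_invariant_subset:
  assumes perm: "\<sigma> permutes A" and fin: "finite A" and M: "M \<subseteq> A" "card A \<le> card M + 1"
    and inv: "\<And>y. \<sigma> y \<in> M \<longleftrightarrow> y \<in> M" and y: "y \<notin> M"
  shows "\<sigma> y = y"
proof (rule ccontr)
  assume "\<sigma> y \<noteq> y"
  then have "y \<in> A" "\<sigma> y \<in> A"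
    using perm permutes_not_in permutes_in_image by metis+
  then have "{y, \<sigma> y} \<subseteq> A - M"
    using y inv by blast
  then have "card {y, \<sigma> y} \<le> card (A - M)"
    using fin by (intro card_mono) auto
  also have "\<dots> \<le> 1"
    using card_Diff_subset[OF finite_subset[OF M(1) fin] M(1)] M(2) by simp
  finally show False
    using \<open>\<sigma> y \<noteq> y\<close> by simp
qed

lemma permutation_commuting_with_prime_order_perm:
  assumes p: "Factorial_Ring.prime (p::nat)" and perms: "\<sigma> permutes A" "\<tau> permutes A"
    and fin: "finite A" and small: "card A \<le> p + 1"
    and pow: "\<tau> ^^ p = id" "\<tau> \<noteq> id" and comm: "\<sigma> \<circ> \<tau> = \<tau> \<circ> \<sigma>"
  obtains j where "\<sigma> = \<tau> ^^ j"
proof -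
  obtain x where x: "\<tau> x \<noteq> x"
    using pow(2) by (auto simp: fun_eq_iff)
  have \<tau>: "permutation \<tau>"
    using permutes_imp_permutation[OF fin perms(2)] .
  have orbit: "orbit \<tau> x = {y. \<tau> y \<noteq> y}"
    using moved_points_eq_orbit_if_prime_order[OF p perms(2) fin small pow(1) x] by simp
  have inv: "\<sigma> y \<in> orbit \<tau> x \<longleftrightarrow> y \<in> orbit \<tau> x" for y
    using commuting_inj_preserves_moved_points[OF comm permutes_inj[OF perms(1)]] orbit by simp
  have "orbit \<tau> x \<subseteq> A" "card A \<le> card (orbit \<tau> x) + 1"
    using orbit permutes_not_in[OF perms(2)] card_orbit_eq_prime[OF p \<tau> pow(1) x] small by auto
  then have fixed: "\<sigma> y = y" "\<tau> y = y" if "y \<notin> orbit \<tau> x" for y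
    using permutes_fixes_outside_invariant_subset[OF perms(1) fin _ _ inv that] orbit that by auto
  have "x \<in> orbit \<tau> x"
    using orbit x by simp
  then obtain j where j: "\<And>z. z \<in> orbit \<tau> x \<Longrightarrow> \<sigma> z = (\<tau> ^^ j) z"
    using commuting_eq_funpow_on_orbit[OF comm \<tau>] inv by metis
  have "\<sigma> z = (\<tau> ^^ j) z" for z
    using j fixed funpow_fixpoint[of \<tau> z j] by (cases "z \<in> orbit \<tau> x") auto
  then show ?thesis
    using that by blast
qed

lemma funpow_cycle_of_list_nth:
  assumes "distinct xs" "k < length xs"
  shows "(cycle_of_list xs ^^ n) (xs ! k) = xs ! ((n + k) mod length xs)"
proof -
  have "(cycle_of_list xs ^^ n) (xs ! k) = map (cycle_of_list xs ^^ n) xs ! k"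
    using assms(2) by simp
  also have "\<dots> = xs ! ((n + k) mod length xs)"
    using cyclic_rotation[OF assms(1)] nth_rotate[OF assms(2)] by simp
  finally show ?thesis .
qed

lemma funpow_length_cycle_of_list:
  assumes "distinct xs"
  shows "cycle_of_list xs ^^ length xs = id"
proof
  fix y
  show "(cycle_of_list xs ^^ length xs) y = id y"
  proof (cases "y \<in> set xs")
    case True
    then obtain k where "k < length xs" "y = xs ! k"
      by (metis in_set_conv_nth)
    then show ?thesis
      using funpow_cycle_of_list_nth[OF assms] by simp
  next
    case False
    then show ?thesis
      using permutes_not_in[OF permutes_funpow[OF cycle_permutes]] by simp
  qed
qed

lemma support_cycle_of_list:
  assumes "distinct xs" "xs \<noteq> []"
  shows "support (cycle_of_list xs) (hd xs) = xs"
proof -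
  let ?c = "cycle_of_list xs" and ?L = "length xs"
  have hd: "hd xs = xs ! 0"
    using assms(2) by (simp add: hd_conv_nth)
  have pow_hd: "(?c ^^ n) (hd xs) = xs ! (n mod ?L)" for n
    using funpow_cycle_of_list_nth[OF assms(1), of 0 n] assms(2) hd by simp
  have "least_power ?c (hd xs) dvd n \<longleftrightarrow> ?L dvd n" for n
  proof -
    have "least_power ?c (hd xs) dvd n \<longleftrightarrow> (?c ^^ n) (hd xs) = hd xs"
      by (rule least_power_dvd[OF permutation_of_cycle])
    also have "\<dots> \<longleftrightarrow> xs ! (n mod ?L) = xs ! 0"
      using pow_hd hd by simp
    also have "\<dots> \<longleftrightarrow> n mod ?L = 0"
      using nth_eq_iff_index_eq[OF assms(1)] assms(2) by simp
    finally show ?thesis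
      by (simp add: dvd_eq_mod_eq_0)
  qed
  then have "least_power ?c (hd xs) = ?L"
    by (meson dvd_antisym dvd_refl)
  then show ?thesis
    using pow_hd by (intro nth_equalityI) auto
qed

lemma cycle_of_list_support:
  assumes "permutation \<sigma>" "{y. \<sigma> y \<noteq> y} \<subseteq> orbit \<sigma> a"
  shows "cycle_of_list (support \<sigma> a) = \<sigma>"
proof
  fix y
  show "cycle_of_list (support \<sigma> a) y = \<sigma> y"
  proof (cases "y \<in> orbit \<sigma> a")
    case True
    then show ?thesis
      using cycle_restrict[OF assms(1)] set_support_eq_orbit[OF assms(1)] by metis
  next
    case False
    then have "y \<notin> set (support \<sigma> a)"
      using set_support_eq_orbit[OF assms(1)] by blast
    then have "cycle_of_list (support \<sigma> a) y = y"
      by (rule id_outside_supp)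
    moreover have "\<sigma> y = y"
      using assms(2) False by blast
    ultimately show ?thesis
      by simp
  qed
qed

definition prime_order_perms :: "nat \<Rightarrow> 'a set \<Rightarrow> ('a \<Rightarrow> 'a) set" where
  "prime_order_perms p A = {\<sigma>. \<sigma> permutes A \<and> \<sigma> \<noteq> id \<and> \<sigma> ^^ p = id}"

lemma cycle_of_list_in_prime_order_perms:
  assumes "distinct xs" "length xs \<ge> 2"
  shows "cycle_of_list xs \<in> prime_order_perms (length xs) (set xs)"
proof -
  obtain a b ys where xs: "xs = a # b # ys"
    using assms(2) by (metis One_nat_def Suc_1 Suc_le_length_iff)
  have "cycle_of_list xs a = b"
    using funpow_cycle_of_list_nth[OF assms(1), of 0 1] xs by simp
  moreover have "b \<noteq> a"
    using assms(1) xs by auto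
  ultimately show ?thesis
    using cycle_permutes[of xs] funpow_length_cycle_of_list[OF assms(1)]
    by (auto simp: prime_order_perms_def)
qed

lemma support_prime_order_perm:
  assumes p: "Factorial_Ring.prime (p::nat)" and A: "finite A" "card A = p"
    and \<sigma>: "\<sigma> \<in> prime_order_perms p A" and a: "a \<in> A"
  shows "support \<sigma> a = a # tl (support \<sigma> a)"
    and "tl (support \<sigma> a) \<in> permutations_of_set (A - {a})"
    and "cycle_of_list (support \<sigma> a) = \<sigma>"
proof -
  have perm: "\<sigma> permutes A" and pow: "\<sigma> ^^ p = id" "\<sigma> \<noteq> id"
    using \<sigma> by (auto simp: prime_order_perms_def)
  have permutation: "permutation \<sigma>"
    using permutes_imp_permutation[OF A(1) perm] .
  have moved: "{y. \<sigma> y \<noteq> y} = A"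
    using moved_points_eq_if_card_eq_prime[OF p perm A pow] .
  then have "{y. \<sigma> y \<noteq> y} = orbit \<sigma> a"
    using moved_points_eq_orbit_if_prime_order[OF p perm A(1) _ pow(1)] a A(2) by auto
  then show "cycle_of_list (support \<sigma> a) = \<sigma>"
    using moved cycle_of_list_support[OF permutation] by auto
  have "set (support \<sigma> a) = A"
    using moved \<open>{y. \<sigma> y \<noteq> y} = orbit \<sigma> a\<close> set_support_eq_orbit[OF permutation] by auto
  moreover show "support \<sigma> a = a # tl (support \<sigma> a)"
    using least_power_of_permutation(2)[OF permutation, of a] by (simp add: upt_conv_Cons)
  moreover have "distinct (support \<sigma> a)"
    using cycle_of_permutation[OF permutation] .
  ultimately have "distinct (a # tl (support \<sigma> a))" "set (a # tl (support \<sigma> a)) = A"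
    by metis+
  then show "tl (support \<sigma> a) \<in> permutations_of_set (A - {a})"
    by (auto simp: permutations_of_set_def)
qed

lemma bij_betw_cycles_prime_order_perms:
  assumes p: "Factorial_Ring.prime (p::nat)" and A: "finite A" "card A = p" and a: "a \<in> A"
  shows "bij_betw (\<lambda>ys. cycle_of_list (a # ys)) (permutations_of_set (A - {a}))
           (prime_order_perms p A)"
proof (rule bij_betw_byWitness[where f' = "\<lambda>\<sigma>. tl (support \<sigma> a)"])
  have distinct: "distinct (a # ys)" and set: "set (a # ys) = A"
    and length: "length (a # ys) = p" if "ys \<in> permutations_of_set (A - {a})" for ys
  proof -
    show "distinct (a # ys)" "set (a # ys) = A"
      using that a by (auto simp: permutations_of_set_def)
    then show "length (a # ys) = p"
      using distinct_card A(2) by metis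
  qed
  show "\<forall>ys\<in>permutations_of_set (A - {a}). tl (support (cycle_of_list (a # ys)) a) = ys"
    using support_cycle_of_list[OF distinct] by simp
  show "\<forall>\<sigma>\<in>prime_order_perms p A. cycle_of_list (a # tl (support \<sigma> a)) = \<sigma>"
    using support_prime_order_perm(1,3)[OF p A _ a] by metis
  show "(\<lambda>ys. cycle_of_list (a # ys)) ` permutations_of_set (A - {a}) \<subseteq> prime_order_perms p A"
  proof (rule image_subsetI)
    fix ys assume ys: "ys \<in> permutations_of_set (A - {a})"
    have "length (a # ys) \<ge> 2"
      using length[OF ys] prime_ge_2_nat[OF p] by simp
    from cycle_of_list_in_prime_order_perms[OF distinct[OF ys] this]
    show "cycle_of_list (a # ys) \<in> prime_order_perms p A"
      unfolding set[OF ys] length[OF ys] .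
  qed
  show "(\<lambda>\<sigma>. tl (support \<sigma> a)) ` prime_order_perms p A \<subseteq> permutations_of_set (A - {a})"
    using support_prime_order_perm(2)[OF p A _ a] by blast
qed

lemma card_prime_order_perms:
  assumes p: "Factorial_Ring.prime (p::nat)" and A: "finite A" "card A = p"
  shows "card (prime_order_perms p A) = fact (p - 1)"
proof -
  have "A \<noteq> {}"
    using A(2) prime_gt_0_nat[OF p] by auto
  then obtain a where a: "a \<in> A"
    by blast
  have "card (prime_order_perms p A) = card (permutations_of_set (A - {a}))"
    using bij_betw_same_card[OF bij_betw_cycles_prime_order_perms[OF p A a]] by simp
  also have "\<dots> = fact (p - 1)"
    using A a by simp
  finally show ?thesis .
qed

lemma prime_order_perms_eq_UN_fixing:
  assumes p: "Factorial_Ring.prime (p::nat)" and A: "finite A" "card A = p + 1"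
  shows "prime_order_perms p A = (\<Union>f\<in>A. prime_order_perms p (A - {f}))"
proof (rule subset_antisym; rule subsetI)
  fix \<sigma> assume "\<sigma> \<in> prime_order_perms p A"
  then have perm: "\<sigma> permutes A" and pow: "\<sigma> ^^ p = id" "\<sigma> \<noteq> id"
    by (auto simp: prime_order_perms_def)
  obtain x where x: "\<sigma> x \<noteq> x"
    using pow(2) by (auto simp: fun_eq_iff)
  have moved: "{y. \<sigma> y \<noteq> y} = orbit \<sigma> x"
    using moved_points_eq_orbit_if_prime_order[OF p perm A(1) _ pow(1) x] A(2) by simp
  have "card (orbit \<sigma> x) = p"
    using card_orbit_eq_prime[OF p permutes_imp_permutation[OF A(1) perm] pow(1) x] .
  moreover have "orbit \<sigma> x \<subseteq> A"
    using permutes_orbit_subset[OF perm] x permutes_not_in[OF perm] by blast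
  ultimately have "\<not> A \<subseteq> orbit \<sigma> x"
    using card_mono[OF finite_subset[OF _ A(1)], of "orbit \<sigma> x" A] A(2) by auto
  then obtain f where f: "f \<in> A" "f \<notin> orbit \<sigma> x"
    by blast
  then have "\<sigma> f = f"
    using moved by blast
  then have "\<sigma> permutes A - {f}"
    by (intro permutes_superset[OF perm]) auto
  then show "\<sigma> \<in> (\<Union>f\<in>A. prime_order_perms p (A - {f}))"
    using f pow by (auto simp: prime_order_perms_def)
next
  fix \<sigma> assume "\<sigma> \<in> (\<Union>f\<in>A. prime_order_perms p (A - {f}))"
  then obtain f where "\<sigma> \<in> prime_order_perms p (A - {f})"
    by blast
  then show "\<sigma> \<in> prime_order_perms p A"
    using permutes_subset[OF _ Diff_subset] by (auto simp: prime_order_perms_def)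
qed

lemma card_prime_order_perms_Suc:
  assumes p: "Factorial_Ring.prime (p::nat)" and A: "finite A" "card A = p + 1"
  shows "card (prime_order_perms p A) = (p + 1) * fact (p - 1)"
proof -
  have card_f: "card (A - {f}) = p" if "f \<in> A" for f
    using that A by simp
  have disjoint: "prime_order_perms p (A - {f}) \<inter> prime_order_perms p (A - {g}) = {}"
    if "f \<in> A" "g \<in> A" "f \<noteq> g" for f g
  proof (rule ccontr)
    assume "prime_order_perms p (A - {f}) \<inter> prime_order_perms p (A - {g}) \<noteq> {}"
    then obtain \<sigma> where \<sigma>f: "\<sigma> \<in> prime_order_perms p (A - {f})"
      and \<sigma>g: "\<sigma> \<in> prime_order_perms p (A - {g})"
      by blast
    have "\<sigma> f = f"
      using \<sigma>f permutes_not_in by (fastforce simp: prime_order_perms_def)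
    moreover have "{y. \<sigma> y \<noteq> y} = A - {g}"
      using \<sigma>g moved_points_eq_if_card_eq_prime[OF p _ _ card_f[OF \<open>g \<in> A\<close>]] A(1)
      by (simp add: prime_order_perms_def)
    ultimately show False
      using that by blast
  qed
  have finite: "finite (prime_order_perms p B)" if "finite B" for B :: "'a set"
    using finite_permutations[OF that] by (rule finite_subset[rotated]) (auto simp: prime_order_perms_def)
  have "card (prime_order_perms p A) = (\<Sum>f\<in>A. card (prime_order_perms p (A - {f})))"
    unfolding prime_order_perms_eq_UN_fixing[OF p A]
    using A(1) finite disjoint by (intro card_UN_disjoint) auto
  also have "\<dots> = (\<Sum>f\<in>A. fact (p - 1))"
    using card_prime_order_perms[OF p _ card_f] A(1) by (intro sum.cong) simp_all
  also have "\<dots> = (p + 1) * fact (p - 1)"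
    using A(2) by simp
  finally show ?thesis .
qed

section \<open>Elements of order \<open>p\<close> in \<open>S_n\<close>\<close>

lemma finite_carrier_sym_group: "finite (carrier (sym_group n))"
  using finite_permutations[of "{1..n}"] by (simp add: sym_group_def)

lemma sym_group_pow: "pow (sym_group n) \<sigma> k = \<sigma> ^^ k"
  by (induction k) (simp_all add: sym_group_mult sym_group_one funpow_swap1)

lemma sym_group_ord_eq_prime_iff:
  assumes p: "Factorial_Ring.prime (p::nat)" and \<sigma>: "\<sigma> \<in> carrier (sym_group n)"
  shows "group.ord (sym_group n) \<sigma> = p \<longleftrightarrow> \<sigma> \<in> prime_order_perms p {1..n}"
proof -
  interpret group "sym_group n"
    by (rule sym_group_is_group)
  have "ord \<sigma> = p \<longleftrightarrow> ord \<sigma> dvd p \<and> ord \<sigma> \<noteq> 1"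
    using p by (auto simp: prime_nat_iff)
  also have "\<dots> \<longleftrightarrow> \<sigma> ^^ p = id \<and> \<sigma> \<noteq> id"
    using pow_eq_id[OF \<sigma>] ord_eq_1[OF \<sigma>] by (simp add: sym_group_pow sym_group_one)
  finally show ?thesis
    using \<sigma> by (auto simp: prime_order_perms_def sym_group_carrier)
qed

lemma sym_group_ord_eq_prime_if_dvd:
  assumes p: "Factorial_Ring.prime (p::nat)" and n: "n \<le> p + 1"
    and \<sigma>: "\<sigma> \<in> carrier (sym_group n)" and dvd: "p dvd group.ord (sym_group n) \<sigma>"
  shows "group.ord (sym_group n) \<sigma> = p"
proof -
  interpret group "sym_group n"
    by (rule sym_group_is_group)
  have perm: "\<sigma> permutes {1..n}"
    using \<sigma> sym_group_carrier by blast
  obtain k where k: "ord \<sigma> = p * k"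
    using dvd by blast
  have "k > 0"
    using k ord_ge_1[OF finite_carrier_sym_group \<sigma>] by (cases k) simp_all
  define \<tau> where "\<tau> = \<sigma> ^^ k"
  have \<tau>_pow: "\<tau> ^^ p = id"
    using pow_ord_eq_1[OF \<sigma>] k
    by (simp add: \<tau>_def sym_group_pow sym_group_one funpow_mult mult.commute)
  have \<tau>_perm: "\<tau> permutes {1..n}"
    unfolding \<tau>_def by (rule permutes_funpow[OF perm])
  have \<tau>_ne: "\<tau> \<noteq> id"
  proof
    assume "\<tau> = id"
    then have "p * k dvd k"
      using pow_eq_id[OF \<sigma>, of k] k by (simp add: \<tau>_def sym_group_pow sym_group_one)
    then show False
      using \<open>k > 0\<close> prime_ge_2_nat[OF p] by (simp add: dvd_imp_le)
  qed
  have comm: "\<sigma> \<circ> \<tau> = \<tau> \<circ> \<sigma>"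
    by (simp add: \<tau>_def funpow_swap1 fun_eq_iff)
  obtain j where "\<sigma> = \<tau> ^^ j"
    by (rule permutation_commuting_with_prime_order_perm[OF p perm \<tau>_perm _ _ \<tau>_pow \<tau>_ne comm])
      (use n in simp_all)
  then have "\<sigma> ^^ p = (\<tau> ^^ p) ^^ j"
    by (simp add: funpow_mult mult.commute)
  then have "\<sigma> ^^ p = id"
    using \<tau>_pow by simp
  then have "ord \<sigma> dvd p"
    using pow_eq_id[OF \<sigma>] by (simp add: sym_group_pow sym_group_one)
  then show ?thesis
    using dvd by (simp add: dvd_antisym)
qed

lemma card_sym_group_elements_of_prime_order:
  assumes p: "Factorial_Ring.prime (p::nat)" and n: "n = p \<or> n = p + 1"
  shows "card {\<sigma> \<in> carrier (sym_group n). group.ord (sym_group n) \<sigma> = p}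
           = (if n = p then fact (p - 1) else (p + 1) * fact (p - 1))"
proof -
  have "prime_order_perms p {1..n} \<subseteq> carrier (sym_group n)"
    by (auto simp: prime_order_perms_def sym_group_carrier)
  then have "{\<sigma> \<in> carrier (sym_group n). group.ord (sym_group n) \<sigma> = p} = prime_order_perms p {1..n}"
    using sym_group_ord_eq_prime_iff[OF p] by blast
  then show ?thesis
    using card_prime_order_perms[OF p, of "{1..n}"] card_prime_order_perms_Suc[OF p, of "{1..n}"] n
    by auto
qed

lemma sym_group_element_of_prime_ord_exists:
  assumes p: "Factorial_Ring.prime (p::nat)" and n: "n = p \<or> n = p + 1"
  obtains \<psi> where "\<psi> \<in> carrier (sym_group n)" "group.ord (sym_group n) \<psi> = p"
proof -
  have "card {\<sigma> \<in> carrier (sym_group n). group.ord (sym_group n) \<sigma> = p} \<noteq> 0"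
    using card_sym_group_elements_of_prime_order[OF p n] by simp
  then have "{\<sigma> \<in> carrier (sym_group n). group.ord (sym_group n) \<sigma> = p} \<noteq> {}"
    by (metis card.empty)
  then show ?thesis
    using that by blast
qed

section \<open>Isolated vertices and components\<close>

lemma component_of_subset:
  assumes "w \<in> V"
  shows "component_of V adj w \<subseteq> V"
proof
  fix v assume "v \<in> component_of V adj w"
  then have "(\<lambda>a b. a \<in> V \<and> b \<in> V \<and> adj a b)\<^sup>*\<^sup>* w v"
    unfolding component_of_def by simp
  then show "v \<in> V"
    by (cases rule: rtranclp.cases) (use assms in auto)
qed

lemma component_of_isolated:
  assumes "isolated_in V adj v"
  shows "component_of V adj v = {v}"
proof -
  have "w = v" if "(\<lambda>a b. a \<in> V \<and> b \<in> V \<and> adj a b)\<^sup>*\<^sup>* v w" for w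
    using that by (induction rule: rtranclp_induct) (use assms in \<open>auto simp: isolated_in_def\<close>)
  then show ?thesis
    unfolding component_of_def by auto
qed

lemma eq_if_isolated_mem_component_of:
  assumes sym: "\<And>a b. adj a b \<Longrightarrow> adj b a" and iso: "isolated_in V adj v"
    and "v \<in> component_of V adj w"
  shows "w = v"
proof -
  have "(\<lambda>a b. a \<in> V \<and> b \<in> V \<and> adj a b)\<^sup>*\<^sup>* w v"
    using assms(3) unfolding component_of_def by simp
  then show ?thesis
    by (cases rule: rtranclp.cases) (use sym iso in \<open>auto simp: isolated_in_def\<close>)
qed

lemma components_meeting_isolated:
  assumes sym: "\<And>a b. adj a b \<Longrightarrow> adj b a" and iso: "\<And>v. v \<in> W \<Longrightarrow> isolated_in V adj v"
  shows "{C \<in> components V adj. C \<inter> W \<noteq> {}} = (\<lambda>v. {v}) ` W"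
proof (rule subset_antisym; rule subsetI)
  fix C assume "C \<in> {C \<in> components V adj. C \<inter> W \<noteq> {}}"
  then obtain w v where "C = component_of V adj w" "v \<in> C" "v \<in> W"
    unfolding components_def by blast
  then show "C \<in> (\<lambda>v. {v}) ` W"
    using eq_if_isolated_mem_component_of[OF sym iso] component_of_isolated[OF iso] by blast
next
  fix C assume "C \<in> (\<lambda>v. {v}) ` W"
  then obtain v where "v \<in> W" "C = {v}"
    by blast
  moreover have "v \<in> V"
    using iso[OF \<open>v \<in> W\<close>] unfolding isolated_in_def by simp
  ultimately show "C \<in> {C \<in> components V adj. C \<inter> W \<noteq> {}}"
    using component_of_isolated[OF iso] unfolding components_def by auto
qed

section \<open>The reduced power graph and the order graph\<close>

context group
begin

lemma pclass_eq_if_mem: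
  assumes "y \<in> pclass G x"
  shows "pclass G y = pclass G x"
  using assms unfolding pclass_def by simp

lemma mem_pclass_self: "x \<in> carrier G \<Longrightarrow> x \<in> pclass G x"
  unfolding pclass_def by simp

lemma ord_eq_if_mem_pclass:
  assumes "y \<in> pclass G x" "x \<in> carrier G"
  shows "ord y = ord x"
  using assms generate_pow_card unfolding pclass_def by force

lemma one_notin_rpg_vertex:
  assumes "A \<in> rpg_vertices G"
  shows "\<one> \<notin> A"
proof
  assume "\<one> \<in> A"
  obtain z where z: "z \<in> carrier G" "z \<noteq> \<one>" "A = pclass G z"
    using assms unfolding rpg_vertices_def by blast
  then have "generate G {z} = {\<one>}"
    using \<open>\<one> \<in> A\<close> generate_one unfolding pclass_def by auto
  then show False
    using generate.incl[of z "{z}" G] z(2) by auto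
qed

lemma ord_pow_dvd_ord:
  assumes "y \<in> carrier G"
  shows "ord (y [^] (k::nat)) dvd ord y"
  using ord_pow_gen[OF assms, of k] dvd_div_mult_self[OF gcd_dvd1[of "ord y" k]]
  by (metis dvd_triv_left one_dvd)

lemma generate_singleton_eq_if_prime_ord:
  assumes y: "y \<in> carrier G" and p: "Factorial_Ring.prime p" and ord_y: "ord y = p"
    and x: "x \<in> generate G {y}" "x \<noteq> \<one>"
  shows "generate G {x} = generate G {y}"
proof -
  obtain k :: nat where k: "x = y [^] k"
    using generate_pow_nat[OF y] x(1) ord_y p by auto
  then have x_carrier: "x \<in> carrier G"
    using y by simp
  have "ord x dvd p" "ord x \<noteq> 1"
    using ord_pow_dvd_ord[OF y, of k] k ord_y ord_eq_1[OF x_carrier] x(2) by simp_all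
  then have "ord x = p"
    using p by (metis prime_nat_iff)
  then have "card (generate G {x}) = card (generate G {y})"
    using generate_pow_card[OF x_carrier] generate_pow_card[OF y] ord_y by simp
  moreover have "generate G {x} \<subseteq> generate G {y}"
    using generate_subgroup_incl[OF _ generate_is_subgroup] x(1) y by auto
  moreover have "finite (generate G {y})"
    using generate_pow_card[OF y] ord_y prime_gt_0_nat[OF p] card_ge_0_finite by metis
  ultimately show ?thesis
    using card_subset_eq by metis
qed

lemma pclass_eq_generate_diff_one:
  assumes x: "x \<in> carrier G" and p: "Factorial_Ring.prime p" and ord_x: "ord x = p"
  shows "pclass G x = generate G {x} - {\<one>}"
proof (rule subset_antisym; rule subsetI)
  fix y assume y: "y \<in> pclass G x"
  then have "y \<in> generate G {x}"
    using generate.incl[of y "{y}" G] unfolding pclass_def by auto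
  moreover have "y \<noteq> \<one>"
    using ord_eq_if_mem_pclass[OF y x] ord_x p ord_id by auto
  ultimately show "y \<in> generate G {x} - {\<one>}"
    by simp
next
  fix y assume y: "y \<in> generate G {x} - {\<one>}"
  then have "y \<in> carrier G"
    using generate_incl[of "{x}"] x by auto
  then show "y \<in> pclass G x"
    using generate_singleton_eq_if_prime_ord[OF x p ord_x] y unfolding pclass_def by auto
qed

lemma card_pclass_eq_prime_minus_one:
  assumes "x \<in> carrier G" "Factorial_Ring.prime p" "ord x = p"
  shows "card (pclass G x) = p - 1"
  using pclass_eq_generate_diff_one[OF assms] generate_pow_card[OF assms(1)] assms(3)
    generate.one[of G "{x}"]
  by (simp add: card_Diff_singleton_if)

lemma generate_eq_if_pow_related:
  assumes p: "Factorial_Ring.prime p"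
    and p_elements: "\<And>y. y \<in> carrier G \<Longrightarrow> p dvd ord y \<Longrightarrow> ord y = p"
    and x: "x \<in> carrier G" "ord x = p" and y: "y \<in> carrier G" "y \<noteq> \<one>"
    and pow: "x = y [^] (k::nat) \<or> y = x [^] k"
  shows "generate G {x} = generate G {y}"
  using pow
proof
  assume x_pow: "x = y [^] k"
  then have ord_y: "ord y = p"
    using p_elements[OF y(1)] ord_pow_dvd_ord[OF y(1), of k] x(2) by simp
  moreover have "x \<in> generate G {y}"
    using generate_pow_nat[OF y(1)] x_pow p ord_y by auto
  moreover have "x \<noteq> \<one>"
    using x p ord_id by auto
  ultimately show ?thesis
    using generate_singleton_eq_if_prime_ord[OF y(1) p] by simp
next
  assume "y = x [^] k"
  then have "y \<in> generate G {x}"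
    using generate_pow_nat[OF x(1)] x(2) p by auto
  then show ?thesis
    using generate_singleton_eq_if_prime_ord[OF x(1) p x(2) _ y(2)] by simp
qed

lemma pclass_isolated_if_prime_ord:
  assumes p: "Factorial_Ring.prime p"
    and p_elements: "\<And>y. y \<in> carrier G \<Longrightarrow> p dvd ord y \<Longrightarrow> ord y = p"
    and \<psi>: "\<psi> \<in> carrier G" "ord \<psi> = p"
  shows "isolated_in (rpg_vertices G) (rpg_adj G) (pclass G \<psi>)"
proof -
  have "\<psi> \<noteq> \<one>"
    using \<psi> p ord_id by auto
  then have A: "pclass G \<psi> \<in> rpg_vertices G"
    using \<psi>(1) unfolding rpg_vertices_def by auto
  have "\<not> rpg_adj G (pclass G \<psi>) B" if B: "B \<in> rpg_vertices G" for B
  proof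
    assume "rpg_adj G (pclass G \<psi>) B"
    then obtain x y k where ne: "pclass G \<psi> \<noteq> B" and x: "x \<in> pclass G \<psi>" and y: "y \<in> B"
      and pow: "x = y [^] (k::nat) \<or> y = x [^] k"
      unfolding rpg_adj_def by blast
    obtain z where z: "z \<in> carrier G" "B = pclass G z"
      using B unfolding rpg_vertices_def by blast
    have "x \<in> carrier G" "y \<in> carrier G"
      using x y z unfolding pclass_def by auto
    moreover have "ord x = p"
      using ord_eq_if_mem_pclass[OF x \<psi>(1)] \<psi>(2) by simp
    moreover have "y \<noteq> \<one>"
      using one_notin_rpg_vertex[OF B] y by auto
    ultimately have "pclass G x = pclass G y"
      using generate_eq_if_pow_related[OF p p_elements _ _ _ _ pow] unfolding pclass_def by simp
    then show False
      using ne pclass_eq_if_mem[OF x] pclass_eq_if_mem[OF y[unfolded z(2)]] z(2) by simp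
  qed
  then show ?thesis
    using A unfolding isolated_in_def by blast
qed

lemma og_isolated_if_prime_ord:
  assumes p: "Factorial_Ring.prime p"
    and p_elements: "\<And>y. y \<in> carrier G \<Longrightarrow> p dvd ord y \<Longrightarrow> ord y = p"
    and \<psi>: "\<psi> \<in> carrier G" "ord \<psi> = p"
  shows "isolated_in (og_vertices G) og_adj p"
proof -
  have "p \<in> og_vertices G"
    using \<psi> p unfolding og_vertices_def by auto
  moreover have "\<not> og_adj p m" if "m \<in> og_vertices G" for m
    using that p_elements p unfolding og_vertices_def og_adj_def by (auto simp: prime_nat_iff)
  ultimately show ?thesis
    unfolding isolated_in_def by blast
qed

lemma card_pclasses_of_prime_ord:
  assumes fin: "finite (carrier G)" and p: "Factorial_Ring.prime p"
  defines "E \<equiv> {x \<in> carrier G. ord x = p}"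
  shows "(p - 1) * card (pclass G ` E) = card E"
proof -
  have union: "\<Union> (pclass G ` E) = E"
    using ord_eq_if_mem_pclass mem_pclass_self unfolding E_def pclass_def by blast
  have "(p - 1) * card (pclass G ` E) = card (\<Union> (pclass G ` E))"
  proof (rule card_partition)
    show "finite (pclass G ` E)" "finite (\<Union> (pclass G ` E))"
      using union fin unfolding E_def by auto
    show "card A = p - 1" if "A \<in> pclass G ` E" for A
      using that card_pclass_eq_prime_minus_one[OF _ p] unfolding E_def by auto
    show "A \<inter> B = {}" if "A \<in> pclass G ` E" "B \<in> pclass G ` E" "A \<noteq> B" for A B
      using that pclass_eq_if_mem by blast
  qed
  then show ?thesis
    using union by simp
qed

lemma rpg_vertex_has_prime_ord_iff:
  assumes "A \<in> rpg_vertices G"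
  shows "(\<exists>\<psi>\<in>A. ord \<psi> = p) \<longleftrightarrow> A \<in> pclass G ` {x \<in> carrier G. ord x = p}"
  using assms pclass_eq_if_mem mem_pclass_self unfolding rpg_vertices_def pclass_def
  by blast

lemma card_rpg_components_of_prime_ord:
  assumes p: "Factorial_Ring.prime p"
    and p_elements: "\<And>y. y \<in> carrier G \<Longrightarrow> p dvd ord y \<Longrightarrow> ord y = p"
  shows "card {C \<in> components (rpg_vertices G) (rpg_adj G). \<exists>A\<in>C. \<exists>\<psi>\<in>A. ord \<psi> = p}
           = card (pclass G ` {x \<in> carrier G. ord x = p})"
proof -
  let ?V = "rpg_vertices G" and ?adj = "rpg_adj G" and ?W = "pclass G ` {x \<in> carrier G. ord x = p}"
  have "(\<exists>A\<in>C. \<exists>\<psi>\<in>A. ord \<psi> = p) \<longleftrightarrow> C \<inter> ?W \<noteq> {}" if C: "C \<in> components ?V ?adj" for C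
  proof -
    obtain w where "w \<in> ?V" "C = component_of ?V ?adj w"
      using C unfolding components_def by blast
    then have "C \<subseteq> ?V"
      using component_of_subset by metis
    then have "(\<exists>\<psi>\<in>A. ord \<psi> = p) \<longleftrightarrow> A \<in> ?W" if A: "A \<in> C" for A
      using A by (intro rpg_vertex_has_prime_ord_iff) blast
    then show ?thesis
      by blast
  qed
  then have "{C \<in> components ?V ?adj. \<exists>A\<in>C. \<exists>\<psi>\<in>A. ord \<psi> = p}
               = {C \<in> components ?V ?adj. C \<inter> ?W \<noteq> {}}"
    by blast
  also have "\<dots> = (\<lambda>A. {A}) ` ?W"
  proof (rule components_meeting_isolated)
    show "?adj B A" if "?adj A B" for A B
      using that unfolding rpg_adj_def by blast
    show "isolated_in ?V ?adj A" if A: "A \<in> ?W" for A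
    proof -
      obtain x where "x \<in> carrier G" "ord x = p" "A = pclass G x"
        using A by blast
      then show ?thesis
        using pclass_isolated_if_prime_ord[OF p p_elements] by simp
    qed
  qed
  finally show ?thesis
    by (simp add: card_image)
qed

end

lemma card_sym_group_pclasses_of_prime_ord:
  assumes p: "Factorial_Ring.prime (p::nat)" and n: "n = p \<or> n = p + 1"
  shows "card (pclass (sym_group n) ` {\<sigma> \<in> carrier (sym_group n). group.ord (sym_group n) \<sigma> = p})
           = (if n = p then fact (p - 2) else (p + 1) * fact (p - 2))"
proof -
  have "p - 1 = Suc (p - 2)"
    using prime_ge_2_nat[OF p] by simp
  then have "fact (p - 1) = (p - 1) * fact (p - 2)"
    by (metis fact_Suc of_nat_id)
  then have "(p - 1) * card (pclass (sym_group n) ` {\<sigma> \<in> carrier (sym_group n). group.ord (sym_group n) \<sigma> = p})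
               = (p - 1) * (if n = p then fact (p - 2) else (p + 1) * fact (p - 2))"
    using group.card_pclasses_of_prime_ord[OF sym_group_is_group finite_carrier_sym_group p]
      card_sym_group_elements_of_prime_order[OF p n]
    by (simp add: algebra_simps)
  then show ?thesis
    using prime_ge_2_nat[OF p] by simp
qed

section \<open>The type graph\<close>

lemma type_pow_add: "type_pow (T + T') a = type_pow T a + type_pow T' a"
  by (simp add: type_pow_def)

lemma type_pow_singleton: "type_pow {#m#} a = replicate_mset (gcd a m) (m div gcd a m)"
  by (simp add: type_pow_def)

lemma type_pow_ones: "type_pow (replicate_mset k 1) a = replicate_mset k 1"
  by (induction k) (simp_all add: type_pow_def)

lemma type_pow_hook:
  assumes p: "Factorial_Ring.prime (p::nat)"
  shows "type_pow (replicate_mset k 1 + {#p#}) a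
           = (if coprime a p then replicate_mset k 1 + {#p#} else replicate_mset (k + p) 1)"
proof -
  have pow: "type_pow (replicate_mset k 1 + {#p#}) a
               = replicate_mset k 1 + replicate_mset (gcd a p) (p div gcd a p)"
    by (simp only: type_pow_add type_pow_ones type_pow_singleton)
  have ones: "replicate_mset k 1 + replicate_mset p 1 = replicate_mset (k + p) (1::nat)"
    by (induction k) simp_all
  have "gcd a p = 1 \<or> gcd a p = p"
    using p by (simp add: prime_nat_iff)
  then show ?thesis
  proof
    assume "gcd a p = 1"
    then show ?thesis
      unfolding pow by (simp add: coprime_iff_gcd_eq_1)
  next
    assume "gcd a p = p"
    then show ?thesis
      unfolding pow ones[symmetric] using prime_gt_0_nat[OF p] p
      by (simp add: coprime_iff_gcd_eq_1)
  qed
qed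

lemma partition_with_sum_le_one:
  assumes "\<forall>m\<in>#W. (m::nat) > 0" "sum_mset W \<le> 1"
  shows "W = replicate_mset (sum_mset W) 1"
proof (cases W)
  case (add x N)
  then have "x + sum_mset N \<le> 1" "x > 0" "\<forall>m\<in>#N. m > 0"
    using assms by auto
  then have "x = 1" "sum_mset N = 0" "\<forall>m\<in>#N. m > 0"
    by linarith+
  then have "N = {#}"
    by (cases N) auto
  then show ?thesis
    using add \<open>x = 1\<close> by simp
qed simp

text \<open>The bound on k is essential: for odd p the square of the type [2, p] is [1, 1, p].\<close>

lemma eq_hook_if_type_pow_eq_hook:
  assumes p: "Factorial_Ring.prime (p::nat)" and k: "k \<le> 1"
    and W: "is_partition (k + p) W" and eq: "type_pow W a = replicate_mset k 1 + {#p#}"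
  shows "W = replicate_mset k 1 + {#p#}"
proof -
  let ?f = "\<lambda>m. replicate_mset (gcd a m) (m div gcd a m)"
  have "p \<in># sum_mset (image_mset ?f W)"
    using eq unfolding type_pow_def by simp
  then obtain m where m: "m \<in># W" and p_in: "p \<in># ?f m"
    by auto
  obtain W' where W': "W = add_mset m W'"
    using m by (metis multi_member_split)
  have m_div: "m div gcd a m = p"
    using p_in by (auto split: if_splits)
  have "count (type_pow W a) p = count (?f m) p + count (type_pow W' a) p"
    using W' by (simp add: type_pow_def)
  then have "gcd a m \<le> 1"
    using eq m_div prime_ge_2_nat[OF p] by simp
  moreover have "gcd a m \<noteq> 0"
    using m_div prime_gt_0_nat[OF p] by (metis div_by_0 less_irrefl)
  ultimately have "m = p"
    using m_div by (metis div_by_1 le_neq_implies_less less_one)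
  then have "sum_mset W' = k" "\<forall>m\<in>#W'. m > 0"
    using W W' unfolding is_partition_def by auto
  then have "W' = replicate_mset k 1"
    using partition_with_sum_le_one k by metis
  then show ?thesis
    using W' \<open>m = p\<close> by simp
qed

lemma hook_isolated_in_tg:
  assumes p: "Factorial_Ring.prime (p::nat)" and k: "k \<le> 1"
  shows "isolated_in (tg_vertices (k + p)) tg_adj (replicate_mset k 1 + {#p#})"
proof -
  let ?T = "replicate_mset k 1 + {#p#}"
  have p2: "p \<ge> 2"
    using prime_ge_2_nat[OF p] .
  have "p \<in># ?T" "p \<notin># replicate_mset (k + p) 1"
    using p2 by auto
  then have "?T \<noteq> replicate_mset (k + p) 1"
    by metis
  then have T: "?T \<in> tg_vertices (k + p)"
    unfolding tg_vertices_def is_partition_def using p2 by auto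
  have "\<not> tg_adj ?T W" if W: "W \<in> tg_vertices (k + p)" for W
  proof
    assume "tg_adj ?T W"
    then obtain a where ne: "?T \<noteq> W" and pow: "W = type_pow ?T a \<or> ?T = type_pow W a"
      unfolding tg_adj_def by blast
    have W': "W \<noteq> replicate_mset (k + p) 1" "is_partition (k + p) W"
      using W unfolding tg_vertices_def by auto
    from pow show False
    proof
      assume "W = type_pow ?T a"
      then show False
        using ne W' type_pow_hook[OF p] by (simp split: if_splits)
    next
      assume "?T = type_pow W a"
      then show False
        using ne eq_hook_if_type_pow_eq_hook[OF p k W'(2)] by metis
    qed
  qed
  then show ?thesis
    using T unfolding isolated_in_def by blast
qed

theorem lemma7p3:
  fixes n p :: nat
  assumes "Factorial_Ring.prime p" and "n \<ge> 2" and "n = p \<or> n = p + 1"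
  shows "isolated_in (og_vertices (sym_group n)) og_adj p
       \<and> isolated_in (tg_vertices n) tg_adj (replicate_mset (n - p) 1 + {#p#})
       \<and> (\<forall>\<psi>\<in>carrier (sym_group n). group.ord (sym_group n) \<psi> = p \<longrightarrow>
            isolated_in (rpg_vertices (sym_group n)) (rpg_adj (sym_group n)) (pclass (sym_group n) \<psi>))
       \<and> card {C \<in> components (rpg_vertices (sym_group n)) (rpg_adj (sym_group n)).
                 \<exists>A\<in>C. \<exists>\<psi>\<in>A. group.ord (sym_group n) \<psi> = p}
         = (if n = p then fact (p - 2) else (p + 1) * fact (p - 2))"
proof -
  note p = assms(1)
  interpret S: group "sym_group n"
    by (rule sym_group_is_group)
  have n: "n \<le> p + 1" "n - p \<le> 1" "n - p + p = n"
    using assms(3) by auto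
  have p_elements: "S.ord y = p" if "y \<in> carrier (sym_group n)" "p dvd S.ord y" for y
    using sym_group_ord_eq_prime_if_dvd[OF p n(1) that] .
  obtain \<psi> where \<psi>: "\<psi> \<in> carrier (sym_group n)" "S.ord \<psi> = p"
    using sym_group_element_of_prime_ord_exists[OF p assms(3)] .
  have tg: "isolated_in (tg_vertices n) tg_adj (replicate_mset (n - p) 1 + {#p#})"
    using hook_isolated_in_tg[OF p n(2)] unfolding n(3) .
  have rpg: "\<forall>\<psi>\<in>carrier (sym_group n). S.ord \<psi> = p \<longrightarrow>
      isolated_in (rpg_vertices (sym_group n)) (rpg_adj (sym_group n)) (pclass (sym_group n) \<psi>)"
    by (intro ballI impI S.pclass_isolated_if_prime_ord[OF p p_elements])
  show ?thesis
    using S.og_isolated_if_prime_ord[OF p p_elements \<psi>] tg rpg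
      S.card_rpg_components_of_prime_ord[OF p p_elements]
      card_sym_group_pclasses_of_prime_ord[OF p assms(3)]
    by simp
qed

end
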